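(* Let $G=(V,E)$ be a graph with a partition $(V_1,V_2)$ of $V$ such that $G[V_1]$ and $G[V_2]$ are $P_5$-free, and let $k$ be an integer. Suppose that: $k\ge 1$; $G$ contains a $P_5$; every vertex of $G$ lies on some $P_5$ in $G$; every $P_5$ in $G$ contains at least $4$ vertices of $V_2$; and there is no vertex $v\in V_2$ that is isolated in $G[V_2]$ and for which there is a path $(v,w,x,y,z)$ in $G$ with $w\in V_1$. Then $G[V_2]$ has no isolated vertices.
   Context: Graphs are finite, simple and undirected. A $P_5$ is a path on $5$ vertices (as a not necessarily induced subgraph), written as the sequence of its vertices; a graph is $P_5$-free if it contains no $P_5$. $G[X]$ denotes the subgraph induced by $X$. *)

theory Defs
  imports Main
begin

definition graph :: "'a set \<Rightarrow> ('a \<Rightarrow> 'a \<Rightarrow> bool) \<Rightarrow> bool" where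
  "graph V E \<longleftrightarrow> finite V \<and> (\<forall>u v. E u v \<longrightarrow> E v u) \<and> (\<forall>v. \<not> E v v)
     \<and> (\<forall>u v. E u v \<longrightarrow> u \<in> V \<and> v \<in> V)"

text \<open>A P5 (not necessarily induced) in the subgraph induced by X, written as the
list of its vertices: five distinct vertices of X, consecutive ones adjacent.\<close>
definition is_P5_in :: "'a set \<Rightarrow> ('a \<Rightarrow> 'a \<Rightarrow> bool) \<Rightarrow> 'a list \<Rightarrow> bool" where
  "is_P5_in X E p \<longleftrightarrow> length p = 5 \<and> distinct p \<and> set p \<subseteq> X
     \<and> (\<forall>i < 4. E (p ! i) (p ! Suc i))"

definition P5_free :: "'a set \<Rightarrow> ('a \<Rightarrow> 'a \<Rightarrow> bool) \<Rightarrow> bool" where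
  "P5_free X E \<longleftrightarrow> \<not> (\<exists>p. is_P5_in X E p)"

definition isolated_in :: "'a set \<Rightarrow> ('a \<Rightarrow> 'a \<Rightarrow> bool) \<Rightarrow> 'a \<Rightarrow> bool" where
  "isolated_in X E v \<longleftrightarrow> v \<in> X \<and> (\<forall>u\<in>X. \<not> E v u)"

end

theory Submission
  imports Defs
begin

text \<open>An isolated vertex \<open>v\<close> of \<open>G[V\<^sub>2]\<close> lies on some \<open>P\<^sub>5\<close>, and its neighbours
on that path lie in \<open>V\<^sub>1\<close>. If \<open>v\<close> were an inner vertex of the path, it would have two
such neighbours, leaving at most three path vertices in \<open>V\<^sub>2\<close>. So \<open>v\<close> is an end vertex;
reading the path from \<open>v\<close> gives a path \<open>(v, w, x, y, z)\<close> with \<open>w \<in> V\<^sub>1\<close>, which is excluded.\<close>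

lemma length_5_conv: "length p = 5 \<longleftrightarrow> (\<exists>a b c d e. p = [a, b, c, d, e])"
  by (auto simp: numeral_eq_Suc length_Suc_conv)

lemma is_P5_in_5_iff:
  "is_P5_in X E [a, b, c, d, e] \<longleftrightarrow> distinct [a, b, c, d, e] \<and> {a, b, c, d, e} \<subseteq> X
     \<and> E a b \<and> E b c \<and> E c d \<and> E d e"
proof -
  have "(\<forall>i<4. E ([a, b, c, d, e] ! i) ([a, b, c, d, e] ! Suc i)) \<longleftrightarrow>
        E a b \<and> E b c \<and> E c d \<and> E d e"
    by (simp add: numeral_eq_Suc less_Suc_eq) blast
  thus ?thesis unfolding is_P5_in_def by auto
qed

lemma is_P5_in_rev:
  assumes sym: "\<And>u w. E u w \<Longrightarrow> E w u" and p: "is_P5_in X E p"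
  shows "is_P5_in X E (rev p)"
proof -
  obtain a b c d e where "p = [a, b, c, d, e]"
    using p unfolding is_P5_in_def length_5_conv by blast
  with p show ?thesis by (auto simp: is_P5_in_5_iff intro: sym)
qed

lemma card_Int_add_two_le:
  assumes "finite A" "u \<in> A - X" "w \<in> A - X" "u \<noteq> w"
  shows "card (A \<inter> X) + 2 \<le> card A"
proof -
  have "card (A \<inter> X) \<le> card (A - {u, w})"
    using assms by (intro card_mono) auto
  also have "\<dots> = card A - 2"
    using assms by (simp add: card_Diff_subset)
  finally show ?thesis
    using assms card_mono[of A "{u, w}"] by simp
qed

lemma isolated_on_P5_is_end:
  assumes sym: "\<And>u w. E u w \<Longrightarrow> E w u"
    and iso: "isolated_in X E v"
    and p: "is_P5_in V E p" "v \<in> set p"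
    and many: "card (set p \<inter> X) \<ge> 4"
  shows "\<exists>w x y z. is_P5_in V E [v, w, x, y, z] \<and> w \<notin> X"
proof -
  have off_X: "E v u \<Longrightarrow> u \<notin> X" for u
    using iso unfolding isolated_in_def by blast
  obtain a b c d e where pe: "p = [a, b, c, d, e]"
    using p(1) unfolding is_P5_in_def length_5_conv by blast
  have path: "distinct [a, b, c, d, e]" "E a b" "E b c" "E c d" "E d e"
    using p(1) unfolding pe is_P5_in_5_iff by auto
  have not_inner: False if "u \<in> set p" "w \<in> set p" "u \<noteq> w" "E v u" "E v w" for u w
  proof -
    have "card (set p \<inter> X) + 2 \<le> card (set p)"
      using that off_X by (intro card_Int_add_two_le) auto
    also have "card (set p) = 5"
      using p(1) by (simp add: is_P5_in_def distinct_card)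
    finally show False using many by simp
  qed
  have "v \<noteq> b" "v \<noteq> c" "v \<noteq> d"
  proof -
    show "v \<noteq> b" using not_inner[of a c] path sym pe by auto
    show "v \<noteq> c" using not_inner[of b d] path sym pe by auto
    show "v \<noteq> d" using not_inner[of c e] path sym pe by auto
  qed
  then consider "v = a" | "v = e" using p(2) pe by auto
  then show ?thesis
  proof cases
    case 1
    then show ?thesis using p(1) pe path(2) off_X by blast
  next
    case 2
    moreover have "is_P5_in V E [e, d, c, b, a]"
      using is_P5_in_rev[OF sym p(1)] pe by simp
    ultimately show ?thesis using path(5) off_X sym by blast
  qed
qed

theorem lemma4:
  fixes V V1 V2 :: "'a set" and E :: "'a \<Rightarrow> 'a \<Rightarrow> bool" and k :: int
  assumes "graph V E"
    and "V1 \<union> V2 = V" and "V1 \<inter> V2 = {}"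
    and "P5_free V1 E" and "P5_free V2 E"
    and "k \<ge> 1"
    and "\<exists>p. is_P5_in V E p"
    and "\<forall>v\<in>V. \<exists>p. is_P5_in V E p \<and> v \<in> set p"
    and "\<forall>p. is_P5_in V E p \<longrightarrow> card (set p \<inter> V2) \<ge> 4"
    and "\<not> (\<exists>v\<in>V2. isolated_in V2 E v \<and>
              (\<exists>w x y z. is_P5_in V E [v, w, x, y, z] \<and> w \<in> V1))"
  shows "\<not> (\<exists>v. isolated_in V2 E v)"
proof
  assume "\<exists>v. isolated_in V2 E v"
  then obtain v where iso: "isolated_in V2 E v" by blast
  have sym: "\<And>u w. E u w \<Longrightarrow> E w u" using assms(1) unfolding graph_def by blast
  have "v \<in> V" using iso assms(2) unfolding isolated_in_def by blast
  then obtain p where p: "is_P5_in V E p" "v \<in> set p" using assms(8) by blast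
  obtain w x y z where wxyz: "is_P5_in V E [v, w, x, y, z]" "w \<notin> V2"
    using isolated_on_P5_is_end[OF sym iso p] assms(9) p(1) by blast
  then have "w \<in> V1" using assms(2) unfolding is_P5_in_def by auto
  with wxyz iso show False using assms(10) unfolding isolated_in_def by blast
qed

end
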